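(* Let $M=p_i^{n_i}p_j^{n_j}p_k^{n_k}$ with distinct primes and $n_i,n_j,n_k\in\mathbb{N}$, let $A\oplus B=\mathbb{Z}_M$ with $\Phi_M(X)\mid A(X)$, assume $A$ is fibered on $D$-grids where $D=M/(p_ip_jp_k)$, and let $\Lambda=\Lambda(z_0,D)$ for some $z_0\in\mathbb{Z}_M$. (i) If there exists $a\in\Sigma_A(\Lambda)\cap\mathcal{I}\cap\mathcal{J}\cap\mathcal{K}$ with $\kappa(a)=i$, then $\kappa(a')=i$ for all $a'\in\Sigma_A(\Lambda)$; in particular $\Sigma_A(\Lambda)\subset\mathcal{I}$. (ii) If $\Sigma_A(\Lambda)\cap\mathcal{I}\cap\mathcal{J}\cap\mathcal{K}=\emptyset$, then there is $S\subset\{i,j,k\}$ with $|S|\le2$ such that $\kappa(a)\in S$ for all $a\in\Sigma_A(\Lambda)$; in particular $\Sigma_A(\Lambda)$ is contained in the union of two of the sets $\mathcal{I},\mathcal{J},\mathcal{K}$. (iii) Assume $\Sigma_A(\Lambda)\cap\mathcal{I}\cap\mathcal{J}\cap\mathcal{K}=\emptyset$ and that (after permuting the indices $i,j,k$ if necessary) $\kappa(a)\in\{i,j\}$ for all $a\in\Sigma_A(\Lambda)$. Let $z_\nu=z_0+\nu M/p_k$ for $\nu=0,1,\dots,p_k-1$. Then for each $\nu$ there is $\lambda(\nu)\in\{i,j\}$ such that $\kappa(a)=\lambda(\nu)$ for all $a\in\Sigma_A(z_\nu*F_i*F_j)$.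
   Context: $A\oplus B=\mathbb{Z}_M$ means every element of $\mathbb{Z}_M$ is uniquely $a+b$, $a\in A$, $b\in B$; $A(X)=\sum_{a\in A}X^a$ ($A$ in $\{0,\dots,M-1\}$), $\Phi_M$ the $M$-th cyclotomic polynomial. For $d\mid M$, $\Lambda(x,d)=\{x'\in\mathbb{Z}_M:d\mid x-x'\}$. For $\nu\in\{i,j,k\}$, $F_\nu=\{0,M/p_\nu,\dots,(p_\nu-1)M/p_\nu\}$; $x*Y=\{x+y:y\in Y\}$ and $X*Y=\{x+y:x\in X,y\in Y\}$. A set $Y$ is fibered in the $p_\nu$ direction if it is a union of sets $y*F_\nu$, $y\in Y$. "$A$ is fibered on $D$-grids" means for every $a\in A$, $A\cap\Lambda(a,D)$ is fibered in some direction $p_\nu$. The function $\kappa:A\to\{i,j,k\}$: for each $D$-grid $\Lambda(x,D)$ meeting $A$, fix one direction $\nu(x)$ in which $A\cap\Lambda(x,D)$ is fibered (chosen arbitrarily if several) and set $\kappa(a)=\nu(x)$ for $a\in A\cap\Lambda(x,D)$. $\mathcal{I}=\{a\in A:a*F_i\subset A\}$, $\mathcal{J},\mathcal{K}$ analogously with $F_j,F_k$. For $Z\subset\mathbb{Z}_M$, $\Sigma_A(Z)=\{a\in A:a+b\in Z\text{ for some }b\in B\}$. *)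

theory Defs
  imports Complex_Main "HOL-Computational_Algebra.Polynomial"
begin

datatype dir = Di | Dj | Dk

text \<open>Elements of Z_M are represented by naturals in {0..<M}; all sums are taken mod M.\<close>

definition direct_sum_Z :: "nat \<Rightarrow> nat set \<Rightarrow> nat set \<Rightarrow> bool" where
  "direct_sum_Z M A B \<longleftrightarrow> A \<subseteq> {..<M} \<and> B \<subseteq> {..<M} \<and>
     (\<forall>x<M. \<exists>!ab. fst ab \<in> A \<and> snd ab \<in> B \<and> (fst ab + snd ab) mod M = x)"

definition mask_poly :: "nat set \<Rightarrow> int poly" where
  "mask_poly A = (\<Sum>a\<in>A. monom 1 a)"

definition cyclotomic :: "nat \<Rightarrow> complex poly" where
  "cyclotomic M = (\<Prod>k\<in>{k. k < M \<and> coprime k M}. [:- cis (2 * pi * real k / real M), 1:])"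

definition Lambda :: "nat \<Rightarrow> nat \<Rightarrow> nat \<Rightarrow> nat set" where
  "Lambda M x d = {x'. x' < M \<and> int d dvd (int x - int x')}"

definition Fib :: "nat \<Rightarrow> (dir \<Rightarrow> nat) \<Rightarrow> dir \<Rightarrow> nat set" where
  "Fib M p v = {t * (M div p v) | t. t < p v}"

definition pt_plus :: "nat \<Rightarrow> nat \<Rightarrow> nat set \<Rightarrow> nat set" where
  "pt_plus M x Y = {(x + y) mod M | y. y \<in> Y}"

definition set_plus_mod :: "nat \<Rightarrow> nat set \<Rightarrow> nat set \<Rightarrow> nat set" where
  "set_plus_mod M X Y = {(x + y) mod M | x y. x \<in> X \<and> y \<in> Y}"

definition fibered :: "nat \<Rightarrow> (dir \<Rightarrow> nat) \<Rightarrow> nat set \<Rightarrow> dir \<Rightarrow> bool" where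
  "fibered M p Y v \<longleftrightarrow> Y = (\<Union>y\<in>Y. pt_plus M y (Fib M p v))"

definition fibered_on_grids :: "nat \<Rightarrow> (dir \<Rightarrow> nat) \<Rightarrow> nat \<Rightarrow> nat set \<Rightarrow> bool" where
  "fibered_on_grids M p D A \<longleftrightarrow> (\<forall>a\<in>A. \<exists>v. fibered M p (A \<inter> Lambda M a D) v)"

definition kappa_ok :: "nat \<Rightarrow> (dir \<Rightarrow> nat) \<Rightarrow> nat \<Rightarrow> nat set \<Rightarrow> (nat \<Rightarrow> dir) \<Rightarrow> bool" where
  "kappa_ok M p D A \<kappa> \<longleftrightarrow>
     (\<forall>a\<in>A. fibered M p (A \<inter> Lambda M a D) (\<kappa> a)) \<and>
     (\<forall>a\<in>A. \<forall>a'\<in>A. a' \<in> Lambda M a D \<longrightarrow> \<kappa> a' = \<kappa> a)"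

definition fullfib :: "nat \<Rightarrow> (dir \<Rightarrow> nat) \<Rightarrow> nat set \<Rightarrow> dir \<Rightarrow> nat set" where
  "fullfib M p A v = {a\<in>A. pt_plus M a (Fib M p v) \<subseteq> A}"

definition SigmaA :: "nat \<Rightarrow> nat set \<Rightarrow> nat set \<Rightarrow> nat set \<Rightarrow> nat set" where
  "SigmaA M A B Z = {a\<in>A. \<exists>b\<in>B. (a + b) mod M \<in> Z}"

end

theory Submission
  imports Defs "HOL-Number_Theory.Cong"
begin

(* Everything rests on a rigidity property of \<kappa>: if a + b + f = a' + b' + f' (mod M) with
   a, a' in A, b, b' in B and f, f' multiples of M/p_\<kappa>(a) and M/p_\<kappa>(a'), then \<kappa>(a) = \<kappa>(a').
   Indeed A restricted to the D-grid of a is fibered in direction \<kappa>(a), so a + f lies in A, and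
   likewise a' + f'; uniqueness of representations in A \<oplus> B forces a + f = a' + f' (mod M), so a
   and a' lie on one D-grid.  Since D is the gcd of M/p_i, M/p_j, M/p_k, two points of a D-grid
   differ by one step in each of the three directions, and (i)-(iii) follow by distributing these
   steps between the two sides. *)

lemma obtain_other_dirs:
  obtains v w :: dir where "distinct [u, v, w]"
  using that[of Dj Dk] that[of Di Dk] that[of Di Dj] by (cases u) auto

lemma obtain_third_dir:
  assumes "v \<noteq> w"
  obtains u :: dir where "distinct [v, u, w]"
  using assms that[of Di] that[of Dj] that[of Dk] by (cases v; cases w) auto

lemma distinct_dirs_exhaust: "distinct [u, v, w] \<Longrightarrow> x \<in> {u, v, w}" for x :: dir
  by (cases x; cases u; cases v; cases w) auto

fun dir_next :: "dir \<Rightarrow> dir" where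
  "dir_next Di = Dj"
| "dir_next Dj = Dk"
| "dir_next Dk = Di"

lemma dir_next_neq: "dir_next v \<noteq> v"
  by (cases v) simp_all

lemma pairwise_coprime_bezout:
  fixes q\<^sub>1 q\<^sub>2 q\<^sub>3 :: int
  assumes "coprime q\<^sub>1 q\<^sub>2" "coprime q\<^sub>1 q\<^sub>3" "coprime q\<^sub>2 q\<^sub>3"
  obtains c\<^sub>1 c\<^sub>2 c\<^sub>3 where "c\<^sub>1 * (q\<^sub>2 * q\<^sub>3) + c\<^sub>2 * (q\<^sub>1 * q\<^sub>3) + c\<^sub>3 * (q\<^sub>1 * q\<^sub>2) = 1"
proof -
  have "coprime (q\<^sub>2 * q\<^sub>3) q\<^sub>1" using assms(1,2) by (simp add: coprime_commute[of _ q\<^sub>1])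
  then have "gcd (q\<^sub>2 * q\<^sub>3) q\<^sub>1 = 1" by (simp only: coprime_iff_gcd_eq_1)
  then obtain \<alpha> \<beta> where \<alpha>\<beta>: "\<alpha> * (q\<^sub>2 * q\<^sub>3) + \<beta> * q\<^sub>1 = 1"
    using bezout_int[of "q\<^sub>2 * q\<^sub>3" q\<^sub>1] by metis
  have "gcd q\<^sub>3 q\<^sub>2 = 1" using assms(3) by (simp only: coprime_iff_gcd_eq_1 gcd.commute)
  then obtain \<gamma> \<delta> where \<gamma>\<delta>: "\<gamma> * q\<^sub>3 + \<delta> * q\<^sub>2 = 1"
    using bezout_int[of q\<^sub>3 q\<^sub>2] by metis
  have "\<alpha> * (q\<^sub>2 * q\<^sub>3) + \<beta> * \<gamma> * (q\<^sub>1 * q\<^sub>3) + \<beta> * \<delta> * (q\<^sub>1 * q\<^sub>2)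
      = \<alpha> * (q\<^sub>2 * q\<^sub>3) + \<beta> * q\<^sub>1 * (\<gamma> * q\<^sub>3 + \<delta> * q\<^sub>2)"
    by (simp add: algebra_simps)
  then show thesis using \<alpha>\<beta> \<gamma>\<delta> by (intro that) simp
qed

lemma shifted_representative:
  fixes f :: int
  assumes "0 < M" "m dvd M" "int m dvd f"
  obtains x where "x < M" "[int x = int a + f] (mod int M)" "[int x = int a] (mod int m)"
proof -
  define x where "x = nat ((int a + f) mod int M)"
  have x: "x < M" "[int x = int a + f] (mod int M)"
    using assms(1) by (auto simp: x_def cong_def nat_less_iff)
  have "[int x = int a + f] (mod int m)"
    using x(2) by (rule cong_dvd_modulus) (simp add: assms(2))
  also have "[int a + f = int a] (mod int m)"
    using assms(3) by (simp add: cong_add_lcancel_0 cong_0_iff)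
  finally show thesis using x that by blast
qed

lemma mem_pt_plus_Fib_iff:
  assumes "0 < M" and "p v dvd M"
  shows "x \<in> pt_plus M y (Fib M p v) \<longleftrightarrow> x < M \<and> [int x = int y] (mod int (M div p v))"
proof
  let ?m = "M div p v"
  assume "x \<in> pt_plus M y (Fib M p v)"
  then obtain t where x: "x = (y + t * ?m) mod M" by (auto simp: pt_plus_def Fib_def)
  have "[x = y + t * ?m] (mod M)" unfolding x by simp
  then have "[x = y + t * ?m] (mod ?m)"
    by (rule cong_dvd_modulus_nat) (use assms(2) in \<open>metis dvd_div_mult_self dvd_triv_left\<close>)
  also have "[y + t * ?m = y] (mod ?m)" by (simp add: cong_add_lcancel_0_nat cong_0_iff)
  finally show "x < M \<and> [int x = int y] (mod int ?m)"
    using assms(1) x by (simp add: cong_int_iff)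
next
  let ?m = "M div p v"
  assume "x < M \<and> [int x = int y] (mod int ?m)"
  then have "x < M" and "[int y = int x] (mod int ?m)" by (auto intro: cong_sym)
  then obtain c where x: "x < M" "int x = int y + int ?m * c" by (auto simp: cong_iff_lin)
  define t where "t = nat (c mod int (p v))"
  have "0 < p v" using assms by (metis dvd_0_left_iff gr0I less_not_refl)
  then have t: "t < p v" "int t = c mod int (p v)" by (simp_all add: t_def nat_less_iff)
  have M_eq: "int M = int (p v) * int ?m" using assms(2) by (metis dvd_mult_div_cancel of_nat_mult)
  have "[(c mod int (p v)) * int ?m = c * int ?m] (mod int (p v) * int ?m)"
    by (simp add: cong_def mult_mod_left)
  then have "[int y + int t * int ?m = int y + c * int ?m] (mod int M)"
    by (simp only: M_eq t(2) cong_add_lcancel)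
  then have "[int (y + t * ?m) = int x] (mod int M)"
    using x(2) by (simp add: algebra_simps)
  then have "[y + t * ?m = x] (mod M)" by (simp only: cong_int_iff)
  then have "x = (y + t * ?m) mod M" using x(1) by (simp add: cong_def)
  then show "x \<in> pt_plus M y (Fib M p v)" using t(1) by (auto simp: pt_plus_def Fib_def)
qed

lemma fibered_closed:
  assumes "fibered M p Y v" "0 < M" "p v dvd M" "y \<in> Y" "x < M"
    and "[int x = int y] (mod int (M div p v))"
  shows "x \<in> Y"
proof -
  have Y: "Y = (\<Union>y'\<in>Y. pt_plus M y' (Fib M p v))" using assms(1) by (simp add: fibered_def)
  then obtain y' where y': "y' \<in> Y" "y \<in> pt_plus M y' (Fib M p v)" using assms(4) by blast
  then have "[int y = int y'] (mod int (M div p v))"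
    using mem_pt_plus_Fib_iff[of M p v y y'] assms(2,3) by simp
  with assms(6) have "[int x = int y'] (mod int (M div p v))" by (rule cong_trans)
  then have "x \<in> pt_plus M y' (Fib M p v)"
    using mem_pt_plus_Fib_iff[of M p v x y'] assms(2,3,5) by simp
  with y'(1) show ?thesis by (subst Y) blast
qed

lemma fullfib_closed:
  assumes "a \<in> fullfib M p A v" "0 < M" "p v dvd M" "x < M"
    and "[int x = int a] (mod int (M div p v))"
  shows "x \<in> A"
  using assms mem_pt_plus_Fib_iff[of M p v x a] by (auto simp: fullfib_def)

lemma direct_sum_Z_unique:
  assumes "direct_sum_Z M A B" "a \<in> A" "a' \<in> A" "b \<in> B" "b' \<in> B"
    and "[int a + int b = int a' + int b'] (mod int M)"
  shows "a = a'" and "b = b'"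
proof -
  define x where "x = (a + b) mod M"
  have "a < M" using assms(1,2) by (auto simp: direct_sum_Z_def)
  then have "x < M" by (simp add: x_def)
  have "(a' + b') mod M = x"
    using assms(6) cong_int_iff[of "a + b" "a' + b'" M] by (simp add: x_def cong_def)
  moreover obtain ab where "\<forall>ab'. fst ab' \<in> A \<and> snd ab' \<in> B \<and> (fst ab' + snd ab') mod M = x \<longleftrightarrow> ab' = ab"
    using assms(1) \<open>x < M\<close> unfolding direct_sum_Z_def by metis
  ultimately have "(a, b) = ab" "(a', b') = ab" using assms(2-5) by (auto simp: x_def)
  then show "a = a'" "b = b'" by auto
qed

lemma direct_sum_Z_represent:
  assumes "direct_sum_Z M A B" "0 < M"
  obtains a b where "a \<in> A" "b \<in> B" "[int a + int b = q] (mod int M)"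
proof -
  define x where "x = nat (q mod int M)"
  have x: "x < M" "[int x = q] (mod int M)"
    using assms(2) by (auto simp: x_def cong_def nat_less_iff)
  then have "\<exists>!ab. fst ab \<in> A \<and> snd ab \<in> B \<and> (fst ab + snd ab) mod M = x"
    using assms(1) by (simp add: direct_sum_Z_def)
  then obtain ab where ab: "fst ab \<in> A" "snd ab \<in> B" "(fst ab + snd ab) mod M = x"
    by (rule ex1E) blast
  then have "[int (fst ab) + int (snd ab) = int x] (mod int M)"
    using cong_int_iff[of "fst ab + snd ab" x M] x(1) by (simp add: cong_def)
  also note x(2)
  finally show thesis using ab(1,2) by (rule that[rotated 2])
qed

lemma mem_SigmaA_Lambda:
  assumes "D dvd M" and "a \<in> SigmaA M A B (Lambda M z D)"
  obtains b where "b \<in> B" and "[int a + int b = int z] (mod int D)"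
proof -
  obtain b where b: "b \<in> B" and "(a + b) mod M \<in> Lambda M z D"
    using assms(2) by (auto simp: SigmaA_def)
  then have "[int ((a + b) mod M) = int z] (mod int D)"
    by (simp add: Lambda_def cong_iff_dvd_diff dvd_diff_commute)
  moreover have "[a + b = (a + b) mod M] (mod D)"
    by (rule cong_dvd_modulus_nat[OF _ assms(1)]) (simp add: cong_sym_eq)
  ultimately have "[int (a + b) = int z] (mod int D)"
    using cong_trans cong_int_iff by blast
  with b show thesis using that by simp
qed

lemma mem_plane:
  assumes "x \<in> set_plus_mod M (pt_plus M z (Fib M p v)) (Fib M p w)"
  obtains f g where "int (M div p v) dvd f" "int (M div p w) dvd g"
    and "[int x = int z + f + g] (mod int M)"
proof -
  from assms obtain s t where x: "x = ((z + s * (M div p v)) mod M + t * (M div p w)) mod M"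
    by (auto simp: set_plus_mod_def pt_plus_def Fib_def)
  then have "[x = z + s * (M div p v) + t * (M div p w)] (mod M)"
    by (simp add: cong_def mod_add_left_eq)
  then have "[int x = int (z + s * (M div p v) + t * (M div p w))] (mod int M)"
    by (simp only: cong_int_iff)
  then show thesis
    by (intro that[of "int (s * (M div p v))" "int (t * (M div p w))"]) simp_all
qed

lemma mem_SigmaA_plane:
  assumes "a \<in> SigmaA M A B (set_plus_mod M (pt_plus M z (Fib M p v)) (Fib M p w))"
  obtains b f g where "b \<in> B" "int (M div p v) dvd f" "int (M div p w) dvd g"
    and "[int a + int b = int z + f + g] (mod int M)"
proof -
  obtain b where b: "b \<in> B"
    and x: "(a + b) mod M \<in> set_plus_mod M (pt_plus M z (Fib M p v)) (Fib M p w)"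
    using assms by (auto simp: SigmaA_def)
  from x obtain f g where fg: "int (M div p v) dvd f" "int (M div p w) dvd g"
    and "[int ((a + b) mod M) = int z + f + g] (mod int M)"
    by (rule mem_plane)
  then have "[int a + int b = int z + f + g] (mod int M)"
    by (simp add: of_nat_mod)
  with b fg show thesis by (rule that)
qed

locale fibered_tiling =
  fixes p :: "dir \<Rightarrow> nat" and M D :: nat and A B :: "nat set" and \<kappa> :: "nat \<Rightarrow> dir"
  assumes prime_p: "\<And>v. prime (p v)" and inj_p: "inj p"
    and M_eq: "M = D * (p Di * p Dj * p Dk)" and D_pos: "0 < D"
    and tiling: "direct_sum_Z M A B" and kappa: "kappa_ok M p D A \<kappa>"
begin

lemma p_pos: "0 < p v"
  using prime_p prime_gt_0_nat by blast

lemma coprime_p: "u \<noteq> v \<Longrightarrow> coprime (int (p u)) (int (p v))"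
  using prime_p inj_p by (simp add: primes_coprime inj_eq)

lemma M_eq_perm: "distinct [u, v, w] \<Longrightarrow> M = D * p v * p w * p u"
  unfolding M_eq by (cases u; cases v; cases w) (simp_all add: ac_simps)

lemma M_div_p: "distinct [u, v, w] \<Longrightarrow> M div p u = D * p v * p w"
  using M_eq_perm p_pos[of u] by simp

lemma M_pos: "0 < M"
  unfolding M_eq using D_pos p_pos by simp

lemma p_dvd_M: "p v dvd M"
proof -
  obtain u w where "distinct [v, u, w]" by (rule obtain_other_dirs)
  then show ?thesis by (simp add: M_eq_perm)
qed

lemma M_div_p_dvd_M: "M div p v dvd M"
  using p_dvd_M by (metis dvd_div_mult_self dvd_triv_left)

lemma D_dvd_M_div_p: "D dvd M div p v"
proof -
  obtain u w where "distinct [v, u, w]" by (rule obtain_other_dirs)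
  then show ?thesis by (simp add: M_div_p mult.assoc)
qed

lemma D_dvd_M: "D dvd M"
  by (simp add: M_eq)

lemma D_dvd_if_M_div_p_dvd: "int (M div p v) dvd f \<Longrightarrow> int D dvd f"
  using D_dvd_M_div_p by (meson dvd_trans int_dvd_int_iff)

lemma A_less_M: "a \<in> A \<Longrightarrow> a < M"
  using tiling by (auto simp: direct_sum_Z_def)

lemma kappa_eq_if_cong_D:
  assumes "a \<in> A" "a' \<in> A" "[int a = int a'] (mod int D)"
  shows "\<kappa> a = \<kappa> a'"
proof -
  have "a' \<in> Lambda M a D" using assms A_less_M by (simp add: Lambda_def cong_iff_dvd_diff)
  then show ?thesis using kappa assms(1,2) by (auto simp: kappa_ok_def)
qed

lemma kappa_fibre_closed:
  assumes "a \<in> A" "x < M" "[int x = int a] (mod int (M div p (\<kappa> a)))"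
  shows "x \<in> A"
proof -
  have "fibered M p (A \<inter> Lambda M a D) (\<kappa> a)" using kappa assms(1) by (simp add: kappa_ok_def)
  moreover have "a \<in> A \<inter> Lambda M a D" using assms(1) A_less_M by (simp add: Lambda_def)
  ultimately have "x \<in> A \<inter> Lambda M a D"
    using fibered_closed M_pos p_dvd_M assms(2,3) by blast
  then show ?thesis by blast
qed

lemma mem_fullfib_kappa: "a \<in> A \<Longrightarrow> a \<in> fullfib M p A (\<kappa> a)"
  using kappa_fibre_closed mem_pt_plus_Fib_iff[OF M_pos p_dvd_M] by (auto simp: fullfib_def)

lemma kappa_shift:
  assumes "a \<in> A" "int (M div p (\<kappa> a)) dvd f"
  obtains x where "x \<in> A" "[int x = int a + f] (mod int M)"
proof -
  obtain x where "x < M" "[int x = int a + f] (mod int M)" "[int x = int a] (mod int (M div p (\<kappa> a)))"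
    using shifted_representative[OF M_pos M_div_p_dvd_M assms(2)] by blast
  then show thesis using kappa_fibre_closed[OF assms(1)] that by blast
qed

lemma kappa_eq_if_sums_cong:
  assumes "a \<in> A" "a' \<in> A" "b \<in> B" "b' \<in> B"
    and "int (M div p (\<kappa> a)) dvd f" "int (M div p (\<kappa> a')) dvd f'"
    and "[int a + int b + f = int a' + int b' + f'] (mod int M)"
  shows "\<kappa> a = \<kappa> a'"
proof -
  obtain x where x: "x \<in> A" "[int x = int a + f] (mod int M)"
    using kappa_shift[OF assms(1,5)] by blast
  obtain x' where x': "x' \<in> A" "[int x' = int a' + f'] (mod int M)"
    using kappa_shift[OF assms(2,6)] by blast
  have "[int x + int b = int a + int b + f] (mod int M)"
    using cong_add[OF x(2) cong_refl[of "int b"]] by (simp add: ac_simps)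
  also note assms(7)
  also have "[int a' + int b' + f' = int x' + int b'] (mod int M)"
    using cong_add[OF x'(2) cong_refl[of "int b'"]] by (simp add: ac_simps cong_sym_eq)
  finally have "x = x'" using direct_sum_Z_unique(1)[OF tiling x(1) x'(1) assms(3,4)] by blast
  have "[int a + f = int a] (mod int D)"
    using D_dvd_if_M_div_p_dvd[OF assms(5)] by (simp add: cong_add_lcancel_0 cong_0_iff)
  then have "[int a = int a + f] (mod int D)" by (rule cong_sym)
  also have "[int a + f = int a' + f'] (mod int D)"
  proof (rule cong_dvd_modulus)
    show "[int a + f = int a' + f'] (mod int M)"
      using x(2) x'(2) unfolding \<open>x = x'\<close> by (metis cong_sym cong_trans)
  qed (simp add: D_dvd_M)
  also have "[int a' + f' = int a'] (mod int D)"
    using D_dvd_if_M_div_p_dvd[OF assms(6)] by (simp add: cong_add_lcancel_0 cong_0_iff)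
  finally show ?thesis using kappa_eq_if_cong_D assms(1,2) by blast
qed

lemma cong_D_split_along_fibres:
  assumes "distinct [u, v, w]" "[x = y] (mod int D)"
  obtains e\<^sub>u e\<^sub>v e\<^sub>w where "int (M div p u) dvd e\<^sub>u" "int (M div p v) dvd e\<^sub>v"
    "int (M div p w) dvd e\<^sub>w" "x = y + e\<^sub>u + e\<^sub>v + e\<^sub>w"
proof -
  have "[y = x] (mod int D)" using assms(2) by (rule cong_sym)
  then obtain c where c: "x = y + int D * c" by (auto simp: cong_iff_lin)
  have "coprime (int (p u)) (int (p v))" "coprime (int (p u)) (int (p w))"
    "coprime (int (p v)) (int (p w))"
    using coprime_p assms(1) by auto
  then obtain c\<^sub>u c\<^sub>v c\<^sub>w where "c\<^sub>u * (int (p v) * int (p w)) + c\<^sub>v * (int (p u) * int (p w))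
      + c\<^sub>w * (int (p u) * int (p v)) = 1"
    by (rule pairwise_coprime_bezout)
  with c have x: "x = y + int D * c * (c\<^sub>u * (int (p v) * int (p w))
      + c\<^sub>v * (int (p u) * int (p w)) + c\<^sub>w * (int (p u) * int (p v)))"
    by simp
  have "M div p u = D * p v * p w" "M div p v = D * p u * p w" "M div p w = D * p u * p v"
    using M_div_p[of u v w] M_div_p[of v u w] M_div_p[of w u v] assms(1) by auto
  show thesis
  proof (rule that)
    show "int (M div p u) dvd c * c\<^sub>u * int (M div p u)" by simp
    show "int (M div p v) dvd c * c\<^sub>v * int (M div p v)" by simp
    show "int (M div p w) dvd c * c\<^sub>w * int (M div p w)" by simp
    show "x = y + c * c\<^sub>u * int (M div p u) + c * c\<^sub>v * int (M div p v) + c * c\<^sub>w * int (M div p w)"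
      using x \<open>M div p u = _\<close> \<open>M div p v = _\<close> \<open>M div p w = _\<close> by (simp add: algebra_simps)
  qed
qed

lemma kappa_eq_on_SigmaA_Lambda_if_fully_fibered:
  assumes a: "a \<in> SigmaA M A B (Lambda M z D)" and full: "\<And>u. a \<in> fullfib M p A u"
    and a': "a' \<in> SigmaA M A B (Lambda M z D)"
  shows "\<kappa> a' = \<kappa> a"
proof (rule ccontr)
  assume "\<kappa> a' \<noteq> \<kappa> a"
  then obtain u where u: "distinct [\<kappa> a, u, \<kappa> a']" by (metis obtain_third_dir)
  have "a \<in> A" "a' \<in> A" using a a' by (simp_all add: SigmaA_def)
  obtain b where b: "b \<in> B" "[int a + int b = int z] (mod int D)"
    using mem_SigmaA_Lambda[OF D_dvd_M a] by blast
  obtain b' where b': "b' \<in> B" "[int a' + int b' = int z] (mod int D)"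
    using mem_SigmaA_Lambda[OF D_dvd_M a'] by blast
  have "[int a' + int b' = int a + int b] (mod int D)"
    using b(2) b'(2) by (metis cong_sym cong_trans)
  then obtain e e\<^sub>u e' where e: "int (M div p (\<kappa> a)) dvd e" "int (M div p u) dvd e\<^sub>u"
      "int (M div p (\<kappa> a')) dvd e'" and sum: "int a' + int b' = int a + int b + e + e\<^sub>u + e'"
    using cong_D_split_along_fibres[OF u] by blast
  obtain y where y: "y < M" "[int y = int a + e\<^sub>u] (mod int M)" "[int y = int a] (mod int (M div p u))"
    using shifted_representative[OF M_pos M_div_p_dvd_M e(2)] by blast
  have "y \<in> A" using fullfib_closed[OF full M_pos p_dvd_M y(1,3)] .
  have "[int y = int a] (mod int D)"
    using y(3) by (rule cong_dvd_modulus) (simp add: D_dvd_M_div_p)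
  then have "\<kappa> y = \<kappa> a" using kappa_eq_if_cong_D \<open>y \<in> A\<close> \<open>a \<in> A\<close> by blast
  have "\<kappa> y = \<kappa> a'"
  proof (rule kappa_eq_if_sums_cong[OF \<open>y \<in> A\<close> \<open>a' \<in> A\<close> b(1) b'(1)])
    show "int (M div p (\<kappa> y)) dvd e" using e(1) \<open>\<kappa> y = \<kappa> a\<close> by simp
    show "int (M div p (\<kappa> a')) dvd - e'" using e(3) by simp
    have "[int y + int b + e = int a + e\<^sub>u + int b + e] (mod int M)"
      by (rule cong_add[OF cong_add[OF y(2) cong_refl] cong_refl])
    also have "int a + e\<^sub>u + int b + e = int a' + int b' + - e'" using sum by simp
    finally show "[int y + int b + e = int a' + int b' + - e'] (mod int M)" .
  qed
  with \<open>\<kappa> y = \<kappa> a\<close> \<open>\<kappa> a' \<noteq> \<kappa> a\<close> show False by simp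
qed

(* If Q = a + b (mod M) with a in A, b in B and v = \<kappa>(a), then Q is joined to P (dir_next v) by one
   step in direction v and one in direction dir_next v, which forces \<kappa>(a) = dir_next v. *)
lemma cyclic_meeting_point:
  assumes "\<And>v w. [P v = P w] (mod int D)"
  shows "\<exists>Q. \<forall>v. \<exists>f g. int (M div p v) dvd f \<and> int (M div p (dir_next v)) dvd g
                      \<and> Q = P (dir_next v) + f + g"
proof -
  obtain \<alpha>\<^sub>i \<alpha>\<^sub>j \<alpha>\<^sub>k where \<alpha>: "int (M div p Di) dvd \<alpha>\<^sub>i" "int (M div p Dj) dvd \<alpha>\<^sub>j"
      "int (M div p Dk) dvd \<alpha>\<^sub>k" "P Di = P Dk + \<alpha>\<^sub>i + \<alpha>\<^sub>j + \<alpha>\<^sub>k"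
    using cong_D_split_along_fibres[of Di Dj Dk "P Di" "P Dk"] assms by auto
  obtain \<beta>\<^sub>i \<beta>\<^sub>j \<beta>\<^sub>k where \<beta>: "int (M div p Di) dvd \<beta>\<^sub>i" "int (M div p Dj) dvd \<beta>\<^sub>j"
      "int (M div p Dk) dvd \<beta>\<^sub>k" "P Dj = P Dk + \<beta>\<^sub>i + \<beta>\<^sub>j + \<beta>\<^sub>k"
    using cong_D_split_along_fibres[of Di Dj Dk "P Dj" "P Dk"] assms by auto
  have "\<exists>f g. int (M div p v) dvd f \<and> int (M div p (dir_next v)) dvd g
              \<and> P Dk + \<alpha>\<^sub>j + \<beta>\<^sub>k = P (dir_next v) + f + g" for v
  proof (cases v)
    case Di
    with \<alpha> \<beta> show ?thesis by (intro exI[of _ "- \<beta>\<^sub>i"] exI[of _ "\<alpha>\<^sub>j - \<beta>\<^sub>j"]) (simp add: dvd_diff)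
  next
    case Dj
    with \<alpha> \<beta> show ?thesis by (intro exI[of _ \<alpha>\<^sub>j] exI[of _ \<beta>\<^sub>k]) simp
  next
    case Dk
    with \<alpha> \<beta> show ?thesis by (intro exI[of _ "\<beta>\<^sub>k - \<alpha>\<^sub>k"] exI[of _ "- \<alpha>\<^sub>i"]) (simp add: dvd_diff)
  qed
  then show ?thesis by blast
qed

lemma SigmaA_Lambda_misses_direction:
  "\<exists>d. \<forall>a\<in>SigmaA M A B (Lambda M z D). \<kappa> a \<noteq> d"
proof (rule ccontr)
  let ?S = "SigmaA M A B (Lambda M z D)"
  assume "\<nexists>d. \<forall>a\<in>?S. \<kappa> a \<noteq> d"
  then have "\<forall>v. \<exists>a\<in>?S. \<kappa> a = v" by blast
  then obtain a where a: "\<And>v. a v \<in> ?S" "\<And>v. \<kappa> (a v) = v" by metis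
  have "\<forall>v. \<exists>b\<in>B. [int (a v) + int b = int z] (mod int D)"
    using mem_SigmaA_Lambda[OF D_dvd_M a(1)] by metis
  then obtain b where b: "\<And>v. b v \<in> B" "\<And>v. [int (a v) + int (b v) = int z] (mod int D)"
    by metis
  define P where "P v = int (a v) + int (b v)" for v
  have P: "[P v = int z] (mod int D)" for v using b(2) by (simp add: P_def)
  have "[P v = P w] (mod int D)" for v w using cong_trans[OF P[of v] cong_sym[OF P[of w]]] .
  from cyclic_meeting_point[OF this] obtain Q where
    Q: "\<forall>v. \<exists>f g. int (M div p v) dvd f \<and> int (M div p (dir_next v)) dvd g \<and> Q = P (dir_next v) + f + g"
    ..
  obtain a\<^sub>0 b\<^sub>0 where ab\<^sub>0: "a\<^sub>0 \<in> A" "b\<^sub>0 \<in> B" "[int a\<^sub>0 + int b\<^sub>0 = Q] (mod int M)"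
    using direct_sum_Z_represent[OF tiling M_pos] by blast
  define v where "v = \<kappa> a\<^sub>0"
  obtain f g where fg: "int (M div p v) dvd f" "int (M div p (dir_next v)) dvd g"
    "Q = P (dir_next v) + f + g"
    using Q by (elim allE exE conjE)
  have "\<kappa> a\<^sub>0 = \<kappa> (a (dir_next v))"
  proof (rule kappa_eq_if_sums_cong[OF ab\<^sub>0(1) _ ab\<^sub>0(2) b(1)])
    show "a (dir_next v) \<in> A" using a(1) by (simp add: SigmaA_def)
    show "int (M div p (\<kappa> a\<^sub>0)) dvd - f" using fg(1) by (simp add: v_def)
    show "int (M div p (\<kappa> (a (dir_next v)))) dvd g" using fg(2) a(2) by simp
    have "[int a\<^sub>0 + int b\<^sub>0 + - f = Q + - f] (mod int M)"
      by (rule cong_add[OF ab\<^sub>0(3) cong_refl])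
    then show "[int a\<^sub>0 + int b\<^sub>0 + - f = int (a (dir_next v)) + int (b (dir_next v)) + g] (mod int M)"
      by (simp add: fg(3) P_def add.assoc)
  qed
  then show False using a(2) dir_next_neq by (metis v_def)
qed

lemma kappa_eq_on_SigmaA_plane:
  assumes a: "a \<in> SigmaA M A B (set_plus_mod M (pt_plus M z (Fib M p v)) (Fib M p w))"
    and a': "a' \<in> SigmaA M A B (set_plus_mod M (pt_plus M z (Fib M p v)) (Fib M p w))"
    and "\<kappa> a = v" "\<kappa> a' = w"
  shows "v = w"
proof -
  obtain b f g where b: "b \<in> B" "int (M div p v) dvd f" "int (M div p w) dvd g"
    "[int a + int b = int z + f + g] (mod int M)"
    using mem_SigmaA_plane[OF a] by blast
  obtain b' f' g' where b': "b' \<in> B" "int (M div p v) dvd f'" "int (M div p w) dvd g'"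
    "[int a' + int b' = int z + f' + g'] (mod int M)"
    using mem_SigmaA_plane[OF a'] by blast
  have "\<kappa> a = \<kappa> a'"
  proof (rule kappa_eq_if_sums_cong[OF _ _ b(1) b'(1)])
    show "a \<in> A" "a' \<in> A" using a a' by (simp_all add: SigmaA_def)
    show "int (M div p (\<kappa> a)) dvd f' - f" using b(2) b'(2) assms(3) by (simp add: dvd_diff)
    show "int (M div p (\<kappa> a')) dvd g - g'" using b(3) b'(3) assms(4) by (simp add: dvd_diff)
    have "[int a + int b + (f' - f) = int z + f + g + (f' - f)] (mod int M)"
      by (rule cong_add[OF b(4) cong_refl])
    also have "int z + f + g + (f' - f) = int z + f' + g' + (g - g')" by simp
    also have "[int z + f' + g' + (g - g') = int a' + int b' + (g - g')] (mod int M)"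
      by (rule cong_add[OF cong_sym[OF b'(4)] cong_refl])
    finally show "[int a + int b + (f' - f) = int a' + int b' + (g - g')] (mod int M)" .
  qed
  with assms(3,4) show ?thesis by simp
qed

lemma plane_subset_Lambda:
  assumes "[z = z\<^sub>0] (mod D)"
  shows "set_plus_mod M (pt_plus M z (Fib M p v)) (Fib M p w) \<subseteq> Lambda M z\<^sub>0 D"
proof
  fix x
  assume x: "x \<in> set_plus_mod M (pt_plus M z (Fib M p v)) (Fib M p w)"
  then obtain f g where fg: "int (M div p v) dvd f" "int (M div p w) dvd g"
    "[int x = int z + f + g] (mod int M)"
    by (rule mem_plane)
  have "[int x = int z + f + g] (mod int D)"
    using fg(3) by (rule cong_dvd_modulus) (simp add: D_dvd_M)
  also have "[int z + f + g = int z] (mod int D)"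
    using D_dvd_if_M_div_p_dvd[OF fg(1)] D_dvd_if_M_div_p_dvd[OF fg(2)]
    by (simp add: add.assoc cong_add_lcancel_0 cong_0_iff)
  also have "[int z = int z\<^sub>0] (mod int D)" using assms by (simp only: cong_int_iff)
  finally have "[int x = int z\<^sub>0] (mod int D)" .
  moreover have "x < M" using x M_pos by (auto simp: set_plus_mod_def)
  ultimately show "x \<in> Lambda M z\<^sub>0 D" by (simp add: Lambda_def cong_iff_dvd_diff dvd_diff_commute)
qed

lemma fibre_step_cong_D: "[(z + t * (M div p u)) mod M = z] (mod D)"
proof -
  have "[(z + t * (M div p u)) mod M = z + t * (M div p u)] (mod D)"
    by (rule cong_dvd_modulus_nat[OF _ D_dvd_M]) simp
  also have "[z + t * (M div p u) = z] (mod D)"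
    using D_dvd_M_div_p by (simp add: cong_add_lcancel_0_nat cong_0_iff)
  finally show ?thesis .
qed

lemma SigmaA_Lambda_kappa_fully_fibered:
  assumes "a \<in> SigmaA M A B (Lambda M z D) \<inter> fullfib M p A Di \<inter> fullfib M p A Dj \<inter> fullfib M p A Dk"
  shows "\<forall>a'\<in>SigmaA M A B (Lambda M z D). \<kappa> a' = \<kappa> a"
    and "SigmaA M A B (Lambda M z D) \<subseteq> fullfib M p A (\<kappa> a)"
proof -
  have "a \<in> fullfib M p A u" for u using assms by (cases u) auto
  with assms show *: "\<forall>a'\<in>SigmaA M A B (Lambda M z D). \<kappa> a' = \<kappa> a"
    using kappa_eq_on_SigmaA_Lambda_if_fully_fibered by blast
  show "SigmaA M A B (Lambda M z D) \<subseteq> fullfib M p A (\<kappa> a)"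
    using * mem_fullfib_kappa by (force simp: SigmaA_def)
qed

lemma SigmaA_Lambda_two_directions:
  obtains v w where "\<forall>a\<in>SigmaA M A B (Lambda M z D). \<kappa> a \<in> {v, w}"
    and "SigmaA M A B (Lambda M z D) \<subseteq> fullfib M p A v \<union> fullfib M p A w"
proof -
  obtain d where d: "\<forall>a\<in>SigmaA M A B (Lambda M z D). \<kappa> a \<noteq> d"
    using SigmaA_Lambda_misses_direction by blast
  obtain v w where "distinct [d, v, w]" by (rule obtain_other_dirs)
  with d have "\<forall>a\<in>SigmaA M A B (Lambda M z D). \<kappa> a \<in> {v, w}"
    using distinct_dirs_exhaust by blast
  moreover have "SigmaA M A B (Lambda M z D) \<subseteq> fullfib M p A v \<union> fullfib M p A w"
    using calculation mem_fullfib_kappa by (force simp: SigmaA_def)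
  ultimately show thesis by (rule that)
qed

lemma SigmaA_plane_kappa_const:
  assumes "\<forall>a\<in>SigmaA M A B (Lambda M z\<^sub>0 D). \<kappa> a \<in> {v, w}" and "[z = z\<^sub>0] (mod D)"
  shows "\<exists>l\<in>{v, w}. \<forall>a\<in>SigmaA M A B (set_plus_mod M (pt_plus M z (Fib M p v)) (Fib M p w)). \<kappa> a = l"
proof -
  let ?P = "SigmaA M A B (set_plus_mod M (pt_plus M z (Fib M p v)) (Fib M p w))"
  have "?P \<subseteq> SigmaA M A B (Lambda M z\<^sub>0 D)"
    using plane_subset_Lambda[OF assms(2)] by (auto simp: SigmaA_def)
  with assms(1) have vw: "\<kappa> a \<in> {v, w}" if "a \<in> ?P" for a using that by blast
  show ?thesis
  proof (cases "?P = {}")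
    case False
    then obtain a\<^sub>0 where "a\<^sub>0 \<in> ?P" by blast
    have "\<kappa> a = \<kappa> a\<^sub>0" if "a \<in> ?P" for a
      using vw[OF that] vw[OF \<open>a\<^sub>0 \<in> ?P\<close>] kappa_eq_on_SigmaA_plane[OF that \<open>a\<^sub>0 \<in> ?P\<close>]
        kappa_eq_on_SigmaA_plane[OF \<open>a\<^sub>0 \<in> ?P\<close> that] by auto
    with vw[OF \<open>a\<^sub>0 \<in> ?P\<close>] show ?thesis by blast
  qed blast
qed

end

theorem lemma7p4:
  fixes p n :: "dir \<Rightarrow> nat" and M D z0 :: nat and A B :: "nat set" and \<kappa> :: "nat \<Rightarrow> dir"
  assumes primes: "\<forall>v. prime (p v)" and distinct: "inj p"
    and expo: "\<forall>v. n v \<ge> 1"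
    and M_def: "M = p Di ^ n Di * p Dj ^ n Dj * p Dk ^ n Dk"
    and tiling: "direct_sum_Z M A B"
    and cyc: "cyclotomic M dvd map_poly of_int (mask_poly A)"
    and D_def: "D = M div (p Di * p Dj * p Dk)"
    and fib: "fibered_on_grids M p D A"
    and kap: "kappa_ok M p D A \<kappa>"
    and z0: "z0 < M"
  shows
   "(\<forall>v. (\<exists>a\<in>SigmaA M A B (Lambda M z0 D) \<inter> fullfib M p A Di \<inter> fullfib M p A Dj \<inter> fullfib M p A Dk.
           \<kappa> a = v) \<longrightarrow>
         (\<forall>a'\<in>SigmaA M A B (Lambda M z0 D). \<kappa> a' = v) \<and>
         SigmaA M A B (Lambda M z0 D) \<subseteq> fullfib M p A v)
    \<and>
    (SigmaA M A B (Lambda M z0 D) \<inter> fullfib M p A Di \<inter> fullfib M p A Dj \<inter> fullfib M p A Dk = {}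
      \<longrightarrow> (\<exists>S. card S \<le> 2 \<and> (\<forall>a\<in>SigmaA M A B (Lambda M z0 D). \<kappa> a \<in> S)) \<and>
          (\<exists>v1 v2. SigmaA M A B (Lambda M z0 D) \<subseteq> fullfib M p A v1 \<union> fullfib M p A v2))
    \<and>
    (\<forall>v1 v2 v3. distinct [v1, v2, v3] \<longrightarrow>
       SigmaA M A B (Lambda M z0 D) \<inter> fullfib M p A Di \<inter> fullfib M p A Dj \<inter> fullfib M p A Dk = {}
       \<longrightarrow> (\<forall>a\<in>SigmaA M A B (Lambda M z0 D). \<kappa> a \<in> {v1, v2})
       \<longrightarrow> (\<forall>t < p v3. \<exists>l\<in>{v1, v2}.
              \<forall>a\<in>SigmaA M A B (set_plus_mod M (pt_plus M ((z0 + t * (M div p v3)) mod M) (Fib M p v1))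
                                               (Fib M p v2)).
                \<kappa> a = l))"
proof -
  have "p v dvd p v ^ n v" for v using expo by (simp add: Suc_le_eq)
  then have "p Di * p Dj * p Dk dvd M" unfolding M_def by (intro mult_dvd_mono)
  moreover have "0 < M" unfolding M_def using primes by (simp add: prime_gt_0_nat)
  ultimately have "M = D * (p Di * p Dj * p Dk)" and "0 < D" unfolding D_def by auto
  then interpret fibered_tiling p M D A B \<kappa>
    using primes distinct tiling kap by unfold_locales auto
  let ?S = "SigmaA M A B (Lambda M z0 D)"
  let ?F = "?S \<inter> fullfib M p A Di \<inter> fullfib M p A Dj \<inter> fullfib M p A Dk"
  have i: "\<forall>v. (\<exists>a\<in>?F. \<kappa> a = v) \<longrightarrow> (\<forall>a'\<in>?S. \<kappa> a' = v) \<and> ?S \<subseteq> fullfib M p A v"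
    using SigmaA_Lambda_kappa_fully_fibered by blast
  obtain v w where "\<forall>a\<in>?S. \<kappa> a \<in> {v, w}" "?S \<subseteq> fullfib M p A v \<union> fullfib M p A w"
    by (rule SigmaA_Lambda_two_directions)
  moreover have "card {v, w} \<le> 2" by (simp add: card_insert_if)
  ultimately have ii: "(\<exists>S. card S \<le> 2 \<and> (\<forall>a\<in>?S. \<kappa> a \<in> S))
      \<and> (\<exists>v1 v2. ?S \<subseteq> fullfib M p A v1 \<union> fullfib M p A v2)"
    by blast
  have iii: "\<forall>v1 v2 v3. distinct [v1, v2, v3] \<longrightarrow> ?F = {} \<longrightarrow> (\<forall>a\<in>?S. \<kappa> a \<in> {v1, v2})
       \<longrightarrow> (\<forall>t < p v3. \<exists>l\<in>{v1, v2}.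
              \<forall>a\<in>SigmaA M A B (set_plus_mod M (pt_plus M ((z0 + t * (M div p v3)) mod M) (Fib M p v1))
                                               (Fib M p v2)).
                \<kappa> a = l)"
    by (intro allI impI SigmaA_plane_kappa_const[OF _ fibre_step_cong_D]) blast
  show ?thesis using i ii iii by blast
qed

end
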